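(* Let $A\subset B$ be prime Goldie $\mathsf{k}$-algebras with $LD\,A=LD\,B$. If $B$ is $LD$-stable, then so is $A$.
   Context: $\mathsf{k}$ is a field of characteristic zero. $GK$ is Gelfand–Kirillov dimension: $GK\,R=\sup_V\limsup_m\log(\dim V^m)/\log m$ over subframes $V$ (finite-dimensional subspaces containing $1$). Lower transcendence degree $LD$: if every subframe $V$ admits a finite-dimensional nonzero $W$ with $\dim VW=\dim W$, then $LD\,R=0$; otherwise $LD\,R=\sup_V\sup\{d>0:\exists c>0,\ \dim VW\ge\dim W+c(\dim W)^{(d-1)/d}\text{ for all finite-dimensional }W\neq0\}$. $R$ is $LD$-stable if $LD\,R=GK\,R$. *)

theory Defs
  imports Complex_Main "HOL-Library.Extended_Real" "HOL-Library.Liminf_Limsup"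
begin

definition k_algebra :: "('k::field_char_0 \<Rightarrow> 'b::ring_1 \<Rightarrow> 'b) \<Rightarrow> bool" where
  "k_algebra s \<longleftrightarrow> vector_space s \<and>
     (\<forall>a x y. s a (x * y) = s a x * y \<and> s a (x * y) = x * s a y)"

definition subalgebra :: "('k::field_char_0 \<Rightarrow> 'b::ring_1 \<Rightarrow> 'b) \<Rightarrow> 'b set \<Rightarrow> bool" where
  "subalgebra s A \<longleftrightarrow> module.subspace s A \<and> 1 \<in> A \<and> (\<forall>x\<in>A. \<forall>y\<in>A. x * y \<in> A)"

definition prod_sp :: "('k::field_char_0 \<Rightarrow> 'b::ring_1 \<Rightarrow> 'b) \<Rightarrow> 'b set \<Rightarrow> 'b set \<Rightarrow> 'b set" where
  "prod_sp s V W = module.span s {v * w | v w. v \<in> V \<and> w \<in> W}"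

fun pow_sp :: "('k::field_char_0 \<Rightarrow> 'b::ring_1 \<Rightarrow> 'b) \<Rightarrow> 'b set \<Rightarrow> nat \<Rightarrow> 'b set" where
  "pow_sp s V 0 = module.span s {1}"
| "pow_sp s V (Suc n) = prod_sp s (pow_sp s V n) V"

definition fd_sub :: "('k::field_char_0 \<Rightarrow> 'b::ring_1 \<Rightarrow> 'b) \<Rightarrow> 'b set \<Rightarrow> 'b set \<Rightarrow> bool" where
  "fd_sub s R W \<longleftrightarrow> module.subspace s W \<and> W \<subseteq> R \<and> (\<exists>F. finite F \<and> module.span s F = W)"

definition subframe :: "('k::field_char_0 \<Rightarrow> 'b::ring_1 \<Rightarrow> 'b) \<Rightarrow> 'b set \<Rightarrow> 'b set \<Rightarrow> bool" where
  "subframe s R V \<longleftrightarrow> fd_sub s R V \<and> 1 \<in> V"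

definition GK :: "('k::field_char_0 \<Rightarrow> 'b::ring_1 \<Rightarrow> 'b) \<Rightarrow> 'b set \<Rightarrow> ereal" where
  "GK s R = (SUP V \<in> {V. subframe s R V}.
     limsup (\<lambda>m::nat. ereal (ln (real (vector_space.dim s (pow_sp s V m))) / ln (real m))))"

definition LD :: "('k::field_char_0 \<Rightarrow> 'b::ring_1 \<Rightarrow> 'b) \<Rightarrow> 'b set \<Rightarrow> ereal" where
  "LD s R = (if (\<forall>V. subframe s R V \<longrightarrow>
                 (\<exists>W. fd_sub s R W \<and> W \<noteq> {0} \<and>
                      vector_space.dim s (prod_sp s V W) = vector_space.dim s W))
     then 0
     else (SUP V \<in> {V. subframe s R V}.
             Sup (ereal ` {d::real. d > 0 \<and> (\<exists>c::real. c > 0 \<and>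
                (\<forall>W. fd_sub s R W \<and> W \<noteq> {0} \<longrightarrow>
                   real (vector_space.dim s (prod_sp s V W))
                     \<ge> real (vector_space.dim s W)
                        + c * (real (vector_space.dim s W)) powr ((d - 1) / d)))})))"

definition LD_stable :: "('k::field_char_0 \<Rightarrow> 'b::ring_1 \<Rightarrow> 'b) \<Rightarrow> 'b set \<Rightarrow> bool" where
  "LD_stable s R \<longleftrightarrow> LD s R = GK s R"

definition prime_ring :: "'b::ring_1 set \<Rightarrow> bool" where
  "prime_ring R \<longleftrightarrow> (1::'b) \<noteq> 0 \<and>
     (\<forall>a\<in>R. \<forall>b\<in>R. (\<forall>r\<in>R. a * r * b = 0) \<longrightarrow> a = 0 \<or> b = 0)"

definition right_ideal :: "'b::ring_1 set \<Rightarrow> 'b set \<Rightarrow> bool" where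
  "right_ideal R I \<longleftrightarrow> I \<subseteq> R \<and> 0 \<in> I \<and> (\<forall>x\<in>I. \<forall>y\<in>I. x - y \<in> I) \<and>
     (\<forall>x\<in>I. \<forall>r\<in>R. x * r \<in> I)"

definition right_ann :: "'b::ring_1 set \<Rightarrow> 'b set \<Rightarrow> 'b set" where
  "right_ann R S = {r \<in> R. \<forall>x\<in>S. x * r = 0}"

definition ideal_sum_below :: "(nat \<Rightarrow> 'b::ring_1 set) \<Rightarrow> nat \<Rightarrow> 'b set" where
  "ideal_sum_below I n = {\<Sum>i<n. x i | x. \<forall>i<n. x i \<in> I i}"

text \<open>Right Goldie: ACC on right annihilators and no infinite direct sum of
  nonzero right ideals (finite right uniform dimension).\<close>
definition goldie_ring :: "'b::ring_1 set \<Rightarrow> bool" where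
  "goldie_ring R \<longleftrightarrow>
     \<not> (\<exists>f::nat \<Rightarrow> 'b set. \<forall>n. (\<exists>S\<subseteq>R. f n = right_ann R S) \<and> f n \<subset> f (Suc n)) \<and>
     \<not> (\<exists>I::nat \<Rightarrow> 'b set. \<forall>n. right_ideal R (I n) \<and> I n \<noteq> {0} \<and>
            I n \<inter> ideal_sum_below I n = {0})"

end

theory Submission
  imports Defs
begin

(* LD never exceeds GK in an algebra with 1 \<noteq> 0: if dim (V W) \<ge> dim W + c (dim W)^((d-1)/d)
   for all W, then for W = V^n this gives a recurrence on a_n = dim V^n forcing
   a_n \<ge> (\<lambda> n)^d, so the growth exponent of V is at least d. GK is monotone under
   inclusion. Hence LD A \<le> GK A \<le> GK B = LD B = LD A. *)

lemma powr_succ_diff_le: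
  fixes x d :: real
  assumes "1 \<le> x" "1 \<le> d"
  shows "(x + 1) powr d - x powr d \<le> d * 2 powr (d - 1) * x powr (d - 1)"
proof -
  have "((\<lambda>t. t powr d) has_real_derivative d * t powr (d - 1)) (at t)" if "x \<le> t" for t
    using that assms by (intro has_real_derivative_powr) auto
  then obtain z where z: "x < z" "z < x + 1" "(x + 1) powr d - x powr d = d * z powr (d - 1)"
    using MVT2[of x "x + 1" "\<lambda>t. t powr d" "\<lambda>t. d * t powr (d - 1)"] by auto
  have "z powr (d - 1) \<le> (2 * x) powr (d - 1)"
    using z assms by (intro powr_mono2) auto
  also have "\<dots> = 2 powr (d - 1) * x powr (d - 1)"
    using assms by (simp add: powr_mult)
  finally show ?thesis
    using z(3) assms by (simp add: mult.assoc mult_left_mono)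
qed

lemma powr_lower_bound_of_recurrence:
  fixes a :: "nat \<Rightarrow> real" and c d :: real
  assumes c: "0 < c" and d: "1 \<le> d" and a1: "1 \<le> a 1"
    and rec: "\<And>n. a n + c * a n powr ((d - 1) / d) \<le> a (Suc n)"
  obtains lam where "0 < lam" "\<And>n. 1 \<le> n \<Longrightarrow> (lam * real n) powr d \<le> a n"
proof
  \<comment> \<open>\<open>lam \<le> 1\<close> settles \<open>n = 1\<close>; \<open>lam d 2^(d-1) \<le> c\<close> absorbs the bound
    of \<open>powr_succ_diff_le\<close> in the induction step.\<close>
  define lam where "lam = min 1 (c / (d * 2 powr (d - 1)))"
  show lam_pos: "0 < lam" using c d by (simp add: lam_def)
  have lam_le: "lam \<le> 1" by (simp add: lam_def)
  have lam_c: "lam * (d * 2 powr (d - 1)) \<le> c"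
    using d by (auto simp: lam_def min_def field_simps)
  show "(lam * real n) powr d \<le> a n" if "1 \<le> n" for n
    using that
  proof (induction n rule: dec_induct)
    case base
    show ?case using a1 lam_pos lam_le d powr_le1[of d lam] by simp
  next
    case (step n)
    let ?y = "(lam * real n) powr d"
    have "(lam * real n) powr (d - 1) = ?y powr ((d - 1) / d)"
      using d by (simp add: powr_powr)
    also have "\<dots> \<le> a n powr ((d - 1) / d)"
      using step d by (intro powr_mono2) auto
    finally have y_le: "c * (lam * real n) powr (d - 1) \<le> c * a n powr ((d - 1) / d)"
      using c by simp
    have "(lam * (real n + 1)) powr d - ?y = lam powr d * ((real n + 1) powr d - real n powr d)"
      using lam_pos by (simp add: powr_mult right_diff_distrib)
    also have "\<dots> \<le> lam powr d * (d * 2 powr (d - 1) * real n powr (d - 1))"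
      using step d by (intro mult_left_mono powr_succ_diff_le) auto
    also have "\<dots> = lam * (d * 2 powr (d - 1)) * (lam * real n) powr (d - 1)"
    proof -
      have "lam powr d = lam * lam powr (d - 1)"
        using lam_pos powr_add[of lam 1 "d - 1"] by simp
      then show ?thesis
        using lam_pos step by (simp add: powr_mult ac_simps)
    qed
    also have "\<dots> \<le> c * (lam * real n) powr (d - 1)"
      using lam_c by (intro mult_right_mono) auto
    finally show ?case
      using y_le step rec[of n] by (simp add: add.commute)
  qed
qed

lemma limsup_ln_ratio_ge:
  fixes a :: "nat \<Rightarrow> real" and lam d :: real
  assumes lam: "0 < lam" and bound: "\<And>n. 1 \<le> n \<Longrightarrow> (lam * real n) powr d \<le> a n"
  shows "ereal d \<le> limsup (\<lambda>m. ereal (ln (a m) / ln (real m)))"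
proof -
  have "eventually (\<lambda>m. ereal (d + d * ln lam / ln (real m)) \<le> ereal (ln (a m) / ln (real m)))
          sequentially"
    using eventually_ge_at_top[of 2]
  proof eventually_elim
    case (elim m)
    then have "0 < ln (real m)" "0 < (lam * real m) powr d" using lam by auto
    moreover have "(lam * real m) powr d \<le> a m" using bound elim by simp
    ultimately have "ln ((lam * real m) powr d) \<le> ln (a m)"
      by (simp only: ln_le_cancel_iff order_less_le_trans)
    moreover have "ln ((lam * real m) powr d) = d * (ln lam + ln (real m))"
      using lam elim by (simp add: ln_powr ln_mult)
    ultimately have "d * (ln lam + ln (real m)) \<le> ln (a m)" by linarith
    then have "d * (ln lam + ln (real m)) / ln (real m) \<le> ln (a m) / ln (real m)"
      using \<open>0 < ln (real m)\<close> by (simp add: divide_right_mono)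
    moreover have "d + d * ln lam / ln (real m) = d * (ln lam + ln (real m)) / ln (real m)"
      using \<open>0 < ln (real m)\<close> by (simp add: field_simps)
    ultimately show ?case by simp
  qed
  then have "limsup (\<lambda>m. ereal (d + d * ln lam / ln (real m)))
      \<le> limsup (\<lambda>m. ereal (ln (a m) / ln (real m)))"
    by (rule Limsup_mono)
  moreover have "(\<lambda>m. d * ln lam / ln (real m)) \<longlonglongrightarrow> 0"
    by (intro tendsto_divide_0[OF tendsto_const] filterlim_at_top_imp_at_infinity
        filterlim_compose[OF ln_at_top filterlim_real_sequentially])
  then have "(\<lambda>m. ereal (d + d * ln lam / ln (real m))) \<longlonglongrightarrow> ereal d"
    using tendsto_add[OF tendsto_const[of d]] by (intro tendsto_ereal) fastforce
  ultimately show ?thesis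
    by (simp add: lim_imp_Limsup)
qed

lemma limsup_ln_ratio_ge_of_recurrence:
  fixes a :: "nat \<Rightarrow> nat" and c d :: real
  assumes c: "0 < c" and d: "0 < d" and a_pos: "\<And>n. 1 \<le> a n"
    and rec: "\<And>n. real (a n) + c * real (a n) powr ((d - 1) / d) \<le> real (a (Suc n))"
  shows "ereal d \<le> limsup (\<lambda>m. ereal (ln (real (a m)) / ln (real m)))"
proof (cases "d \<le> 1")
  case True
  have incr: "a n < a (Suc n)" for n
  proof -
    have "0 < c * real (a n) powr ((d - 1) / d)"
      using c a_pos[of n] by simp
    then show ?thesis using rec[of n] by linarith
  qed
  have "n < a n" for n
  proof (induction n)
    case 0
    show ?case using a_pos[of 0] by simp
  next
    case (Suc n)
    show ?case using Suc.IH incr[of n] by simp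
  qed
  then have "(1 * real n) powr 1 \<le> real (a n)" if "1 \<le> n" for n
    using that by (simp add: less_imp_le)
  then have "ereal 1 \<le> limsup (\<lambda>m. ereal (ln (real (a m)) / ln (real m)))"
    by (rule limsup_ln_ratio_ge[OF zero_less_one])
  moreover have "ereal d \<le> ereal 1" using True by simp
  ultimately show ?thesis by (rule order_trans[rotated])
next
  case False
  then have "1 \<le> d" by simp
  obtain lam where "0 < lam" "\<And>n. 1 \<le> n \<Longrightarrow> (lam * real n) powr d \<le> real (a n)"
    by (rule powr_lower_bound_of_recurrence[OF c \<open>1 \<le> d\<close>, of "\<lambda>n. real (a n)"])
      (use a_pos rec in simp_all)
  then show ?thesis by (rule limsup_ln_ratio_ge)
qed

locale algebra_over = vector_space scale
  for scale :: "'k::field_char_0 \<Rightarrow> 'b::ring_1 \<Rightarrow> 'b" +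
  assumes scale_mult_left: "scale a (x * y) = scale a x * y"
    and scale_mult_right: "scale a (x * y) = x * scale a y"

lemma k_algebra_iff_algebra_over: "k_algebra s \<longleftrightarrow> algebra_over s"
  by (auto simp: k_algebra_def algebra_over_def algebra_over_axioms_def)

context algebra_over
begin

lemma linear_mult_left: "Vector_Spaces.linear scale scale (\<lambda>x. v * x)"
  unfolding Vector_Spaces.linear_iff using vector_space_axioms
  by (simp add: distrib_left scale_mult_right)

lemma linear_mult_right: "Vector_Spaces.linear scale scale (\<lambda>x. x * v)"
  unfolding Vector_Spaces.linear_iff using vector_space_axioms
  by (simp add: distrib_right scale_mult_left)

lemma mult_left_span: "(\<lambda>x. v * x) ` span X = span ((\<lambda>x. v * x) ` X)"
  using module_hom.span_image[OF linear_mult_left[unfolded linear_iff_module_hom]] by simp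

lemma mult_right_span: "(\<lambda>x. x * v) ` span X = span ((\<lambda>x. x * v) ` X)"
  using module_hom.span_image[OF linear_mult_right[unfolded linear_iff_module_hom]] by simp

lemma prod_sp_span:
  "prod_sp scale (span P) (span G) = span {u * g | u g. u \<in> P \<and> g \<in> G}"
  (is "_ = span ?PG")
proof
  have "v * w \<in> span ?PG" if v: "v \<in> span P" and w: "w \<in> span G" for v w
  proof -
    have uw: "u * w \<in> span ?PG" if "u \<in> P" for u
    proof -
      have "u * w \<in> (\<lambda>x. u * x) ` span G" using w by blast
      also have "\<dots> = span ((\<lambda>x. u * x) ` G)" by (rule mult_left_span)
      also have "\<dots> \<subseteq> span ?PG" using that by (intro span_mono) blast
      finally show ?thesis .
    qed
    have "v * w \<in> (\<lambda>x. x * w) ` span P" using v by blast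
    also have "\<dots> = span ((\<lambda>x. x * w) ` P)" by (rule mult_right_span)
    also have "\<dots> \<subseteq> span ?PG" using uw by (intro span_minimal subspace_span) blast
    finally show ?thesis .
  qed
  then show "prod_sp scale (span P) (span G) \<subseteq> span ?PG"
    unfolding prod_sp_def by (intro span_minimal subspace_span) blast
  show "span ?PG \<subseteq> prod_sp scale (span P) (span G)"
    unfolding prod_sp_def by (intro span_mono) (blast intro: span_base)
qed

lemma pow_sp_finitely_spanned:
  assumes "finite G"
  shows "\<exists>F. finite F \<and> span F = pow_sp scale (span G) n"
proof (induction n)
  case 0
  show ?case by (intro exI[of _ "{1}"]) simp
next
  case (Suc n)
  then obtain F where F: "finite F" "span F = pow_sp scale (span G) n" by blast
  have "{u * g | u g. u \<in> F \<and> g \<in> G} = (\<lambda>(u, g). u * g) ` (F \<times> G)" by auto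
  then have "finite {u * g | u g. u \<in> F \<and> g \<in> G}"
    using F(1) assms by simp
  moreover have "span {u * g | u g. u \<in> F \<and> g \<in> G} = pow_sp scale (span G) (Suc n)"
    using prod_sp_span[of F G] F(2) by simp
  ultimately show ?case by blast
qed

lemma pow_sp_subset:
  assumes "subalgebra scale A" "V \<subseteq> A"
  shows "pow_sp scale V n \<subseteq> A"
proof (induction n)
  case 0
  show ?case using assms(1) unfolding subalgebra_def pow_sp.simps by (intro span_minimal) auto
next
  case (Suc n)
  have "{v * w | v w. v \<in> pow_sp scale V n \<and> w \<in> V} \<subseteq> A"
    using Suc assms by (auto simp: subalgebra_def)
  then show ?case
    using assms(1) unfolding subalgebra_def pow_sp.simps prod_sp_def by (intro span_minimal) auto
qed

lemma one_mem_pow_sp: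
  assumes "1 \<in> V"
  shows "1 \<in> pow_sp scale V n"
proof (induction n)
  case (Suc n)
  then have "1 * 1 \<in> {v * w | v w. v \<in> pow_sp scale V n \<and> w \<in> V}" using assms by blast
  then show ?case unfolding pow_sp.simps prod_sp_def by (simp add: span_base)
qed (simp add: span_base)

lemma mult_mem_pow_sp:
  assumes "v \<in> V"
  shows "w \<in> pow_sp scale V n \<Longrightarrow> v * w \<in> pow_sp scale V (Suc n)"
  unfolding pow_sp.simps(2)
proof (induction n arbitrary: w)
  case 0
  then obtain c where "w = scale c 1" by (auto simp: span_singleton)
  then have "v * w = w * v" by (metis mult_1_left mult_1_right scale_mult_left scale_mult_right)
  then show ?case
    using 0 assms unfolding pow_sp.simps prod_sp_def by (auto intro: span_base)
next
  case (Suc n)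
  let ?P = "{a * b | a b. a \<in> pow_sp scale V n \<and> b \<in> V}"
  have "v * p \<in> pow_sp scale V (Suc (Suc n))" if "p \<in> ?P" for p
  proof -
    from that obtain a b where "p = a * b" "a \<in> pow_sp scale V n" "b \<in> V" by blast
    then have "v * p = (v * a) * b" "v * a \<in> pow_sp scale V (Suc n)"
      using Suc.IH by (auto simp: mult.assoc)
    then show ?thesis
      using \<open>b \<in> V\<close> unfolding pow_sp.simps(2)[of _ _ "Suc n"] prod_sp_def by (auto intro: span_base)
  qed
  then have "(\<lambda>x. v * x) ` ?P \<subseteq> pow_sp scale V (Suc (Suc n))" by blast
  then have "span ((\<lambda>x. v * x) ` ?P) \<subseteq> pow_sp scale V (Suc (Suc n))"
    by (intro span_minimal) (simp_all add: prod_sp_def)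
  then show ?case
    using Suc.prems mult_left_span[of v ?P] by (auto simp: prod_sp_def)
qed

lemma prod_sp_pow_sp_subset: "prod_sp scale V (pow_sp scale V n) \<subseteq> pow_sp scale V (Suc n)"
  unfolding prod_sp_def[of _ V]
  using mult_mem_pow_sp[unfolded pow_sp.simps] by (intro span_minimal) (auto simp: prod_sp_def)

lemma dim_le_fd_sub:
  assumes "fd_sub scale R W" "S \<subseteq> W"
  shows "dim S \<le> dim W"
proof -
  obtain F where "finite F" "span F = W" using assms(1) by (auto simp: fd_sub_def)
  obtain B where B: "B \<subseteq> W" "independent B" "W \<subseteq> span B" "card B = dim W"
    using basis_exists by blast
  have "finite B" using independent_span_bound[OF \<open>finite F\<close> B(2)] B(1) \<open>span F = W\<close> by auto
  then show ?thesis using dim_le_card[of S B] assms(2) B(3,4) by auto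
qed

lemma dim_pos_fd_sub:
  assumes "fd_sub scale R W" "x \<in> W" "x \<noteq> 0"
  shows "1 \<le> dim W"
proof -
  have "dim {x} = 1" using assms(3) by (simp add: dim_eq_card_independent independent_insert)
  then show ?thesis using dim_le_fd_sub[OF assms(1), of "{x}"] assms(2) by simp
qed

lemma fd_sub_pow_sp:
  assumes "subalgebra scale A" "subframe scale A V"
  shows "fd_sub scale A (pow_sp scale V n)"
proof -
  obtain G where "finite G" "span G = V" "V \<subseteq> A"
    using assms(2) by (auto simp: subframe_def fd_sub_def)
  then show ?thesis
    using pow_sp_finitely_spanned[of G n] pow_sp_subset[OF assms(1)]
    by (metis fd_sub_def subspace_span)
qed

lemma dim_pow_sp_pos:
  assumes "subalgebra scale A" "subframe scale A V" "(1::'b) \<noteq> 0"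
  shows "1 \<le> dim (pow_sp scale V n)"
  using dim_pos_fd_sub[OF fd_sub_pow_sp[OF assms(1,2)] one_mem_pow_sp] assms(2,3)
  by (auto simp: subframe_def)

end

definition GK_frame :: "('k::field_char_0 \<Rightarrow> 'b::ring_1 \<Rightarrow> 'b) \<Rightarrow> 'b set \<Rightarrow> ereal" where
  "GK_frame s V = limsup (\<lambda>m::nat. ereal (ln (real (vector_space.dim s (pow_sp s V m))) / ln (real m)))"

definition isoperimetric_exponent ::
    "('k::field_char_0 \<Rightarrow> 'b::ring_1 \<Rightarrow> 'b) \<Rightarrow> 'b set \<Rightarrow> 'b set \<Rightarrow> real \<Rightarrow> bool" where
  "isoperimetric_exponent s R V d \<longleftrightarrow> d > 0 \<and> (\<exists>c::real. c > 0 \<and>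
     (\<forall>W. fd_sub s R W \<and> W \<noteq> {0} \<longrightarrow>
        real (vector_space.dim s (prod_sp s V W))
          \<ge> real (vector_space.dim s W) + c * (real (vector_space.dim s W)) powr ((d - 1) / d)))"

lemma GK_eq_SUP_GK_frame: "GK s R = (SUP V \<in> {V. subframe s R V}. GK_frame s V)"
  by (simp add: GK_def GK_frame_def)

lemma LD_cases:
  "LD s R = 0 \<or> LD s R = (SUP V \<in> {V. subframe s R V}. Sup (ereal ` {d. isoperimetric_exponent s R V d}))"
  unfolding LD_def isoperimetric_exponent_def
  by (rule if_split[where P = "\<lambda>x. x = 0 \<or> x = _", THEN iffD2]) simp

lemma GK_mono:
  assumes "R \<subseteq> S"
  shows "GK s R \<le> GK s S"
proof -
  have "{V. subframe s R V} \<subseteq> {V. subframe s S V}"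
    using assms unfolding subframe_def fd_sub_def by blast
  then show ?thesis
    unfolding GK_eq_SUP_GK_frame by (rule SUP_subset_mono) simp
qed

context algebra_over
begin

lemma GK_frame_nonneg:
  assumes "subalgebra scale A" "subframe scale A V" "(1::'b) \<noteq> 0"
  shows "0 \<le> GK_frame scale V"
  unfolding GK_frame_def
proof (intro le_Limsup)
  show "\<forall>\<^sub>F m in sequentially. 0 \<le> ereal (ln (real (dim (pow_sp scale V m))) / ln (real m))"
    using eventually_ge_at_top[of 1]
  proof eventually_elim
    case (elim m)
    have "0 \<le> ln (real (dim (pow_sp scale V m)))"
      using dim_pow_sp_pos[OF assms] by simp
    then show ?case
      using elim by (simp add: divide_nonneg_nonneg)
  qed
qed simp

lemma isoperimetric_exponent_le_GK_frame:
  assumes A: "subalgebra scale A" and V: "subframe scale A V" and one: "(1::'b) \<noteq> 0"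
    and "isoperimetric_exponent scale A V d"
  shows "ereal d \<le> GK_frame scale V"
proof -
  obtain c where "0 < d" "0 < c" and iso: "\<And>W. fd_sub scale A W \<Longrightarrow> W \<noteq> {0} \<Longrightarrow>
      real (dim W) + c * real (dim W) powr ((d - 1) / d) \<le> real (dim (prod_sp scale V W))"
    using assms(4) by (auto simp: isoperimetric_exponent_def)
  have rec: "real (dim (pow_sp scale V n)) + c * real (dim (pow_sp scale V n)) powr ((d - 1) / d)
      \<le> real (dim (pow_sp scale V (Suc n)))" for n
  proof -
    have "1 \<in> pow_sp scale V n"
      using one_mem_pow_sp V by (simp add: subframe_def)
    then have "pow_sp scale V n \<noteq> {0}"
      using one by auto
    then have "real (dim (pow_sp scale V n)) + c * real (dim (pow_sp scale V n)) powr ((d - 1) / d)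
        \<le> real (dim (prod_sp scale V (pow_sp scale V n)))"
      by (rule iso[OF fd_sub_pow_sp[OF A V]])
    also have "\<dots> \<le> real (dim (pow_sp scale V (Suc n)))"
      using dim_le_fd_sub[OF fd_sub_pow_sp[OF A V] prod_sp_pow_sp_subset] by simp
    finally show ?thesis .
  qed
  show ?thesis
    unfolding GK_frame_def
    by (rule limsup_ln_ratio_ge_of_recurrence[where a = "\<lambda>n. dim (pow_sp scale V n)",
          OF \<open>0 < c\<close> \<open>0 < d\<close> dim_pow_sp_pos[OF A V one] rec])
qed

lemma LD_le_GK:
  assumes A: "subalgebra scale A" and one: "(1::'b) \<noteq> 0"
  shows "LD scale A \<le> GK scale A"
proof -
  have "span {1} \<subseteq> A"
    using A by (intro span_minimal) (auto simp: subalgebra_def)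
  then have "subframe scale A (span {1})"
    by (auto simp: subframe_def fd_sub_def intro: span_base)
  then have "0 \<le> GK scale A"
    unfolding GK_eq_SUP_GK_frame using GK_frame_nonneg[OF A _ one]
    by (meson SUP_upper2 mem_Collect_eq)
  moreover have "(SUP V \<in> {V. subframe scale A V}. Sup (ereal ` {d. isoperimetric_exponent scale A V d}))
      \<le> GK scale A"
    unfolding GK_eq_SUP_GK_frame
  proof (rule SUP_mono)
    fix V assume "V \<in> {V. subframe scale A V}"
    then show "\<exists>V'\<in>{V. subframe scale A V}.
        Sup (ereal ` {d. isoperimetric_exponent scale A V d}) \<le> GK_frame scale V'"
      using isoperimetric_exponent_le_GK_frame[OF A _ one] by (intro bexI[of _ V] Sup_least) auto
  qed
  ultimately show ?thesis
    using LD_cases[of scale A] by auto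
qed

end

theorem lemma3p2:
  fixes scale :: "'k::field_char_0 \<Rightarrow> 'b::ring_1 \<Rightarrow> 'b" and A :: "'b set"
  assumes "k_algebra scale"
    and "subalgebra scale A"
    and "prime_ring A" and "goldie_ring A"
    and "prime_ring (UNIV :: 'b set)" and "goldie_ring (UNIV :: 'b set)"
    and "LD scale A = LD scale UNIV"
    and "LD_stable scale UNIV"
  shows "LD_stable scale A"
proof -
  interpret algebra_over scale
    using assms(1) by (simp add: k_algebra_iff_algebra_over)
  have "(1::'b) \<noteq> 0" using assms(3) by (simp add: prime_ring_def)
  have "GK scale A \<le> GK scale UNIV" by (rule GK_mono) simp
  also have "\<dots> = LD scale A" using assms(7,8) by (simp add: LD_stable_def)
  finally show ?thesis
    using LD_le_GK[OF assms(2) \<open>1 \<noteq> 0\<close>] by (simp add: LD_stable_def antisym)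
qed

end
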